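(* Let $(\Omega,T)$ be a strictly ergodic subshift over a finite alphabet $A\subset\mathbb{R}$ and $E\in\mathbb{R}$. Then $M^E$ is uniform if and only if the limit $\lim_{|x|\to\infty}\frac{F^E(x)}{|x|}$ (over $x\in\mathcal{W}$) exists.
   Context: Let $A\subset\mathbb{R}$ be finite with the discrete topology, $A^{\mathbb{Z}}$ with the product topology, and $T$ the shift $(Ta)(n)=a(n+1)$. A subshift is a closed $T$-invariant set $\Omega\subset A^{\mathbb{Z}}$; strictly ergodic means every orbit is dense and there is exactly one $T$-invariant Borel probability measure. $\mathcal{W}$ is the set of finite subwords of elements of $\Omega$ and $|x|$ the length of $x$. For $E\in\mathbb{R}$, $M^E(\omega)=\begin{pmatrix}E-\omega(1)&-1\\1&0\end{pmatrix}$, $M^E(n,\omega)=M^E(T^{n-1}\omega)\cdots M^E(\omega)$ for $n>0$, $\mathrm{Id}$ for $n=0$, $M^E(T^n\omega)^{-1}\cdots M^E(T^{-1}\omega)^{-1}$ for $n<0$. With $\|\cdot\|$ the operator norm, $M^E$ is uniform if $\lim_{|n|\to\infty}\frac1{|n|}\log\|M^E(n,\omega)\|$ exists for every $\omega\in\Omega$ and the convergence is uniform on $\Omega$. Define $F^E:\mathcal{W}\to\mathbb{R}$ by $F^E(x)=\log\|M^E(|x|,\omega)\|$, where $\omega\in\Omega$ is any element with $\omega(1)\cdots\omega(|x|)=x$ (this is independent of the choice of $\omega$). *)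

theory Defs
  imports "HOL-Probability.Probability"
begin

definition shift :: "(int \<Rightarrow> real) \<Rightarrow> (int \<Rightarrow> real)" where
  "shift a = (\<lambda>n. a (n + 1))"

definition shiftn :: "int \<Rightarrow> (int \<Rightarrow> real) \<Rightarrow> (int \<Rightarrow> real)" where
  "shiftn k a = (\<lambda>n. a (n + k))"

text \<open>Subshift over the finite alphabet A (product topology on functions int => real;
  since A is finite, this restricts to the product of discrete topologies on A^Z).\<close>

definition subshift :: "real set \<Rightarrow> (int \<Rightarrow> real) set \<Rightarrow> bool" where
  "subshift A \<Omega> \<longleftrightarrow> finite A \<and> \<Omega> \<subseteq> {a. \<forall>n. a n \<in> A} \<and> closed \<Omega> \<and> shift ` \<Omega> = \<Omega>"

definition minimal_shift :: "(int \<Rightarrow> real) set \<Rightarrow> bool" where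
  "minimal_shift \<Omega> \<longleftrightarrow> (\<forall>\<omega>\<in>\<Omega>. \<Omega> \<subseteq> closure {shiftn k \<omega> | k. True})"

definition invariant_prob :: "(int \<Rightarrow> real) set \<Rightarrow> (int \<Rightarrow> real) measure \<Rightarrow> bool" where
  "invariant_prob \<Omega> \<mu> \<longleftrightarrow>
     sets \<mu> = sets (restrict_space borel \<Omega>) \<and> prob_space \<mu> \<and>
     (\<forall>B\<in>sets \<mu>. emeasure \<mu> (shift -` B \<inter> \<Omega>) = emeasure \<mu> B)"

definition uniquely_ergodic :: "(int \<Rightarrow> real) set \<Rightarrow> bool" where
  "uniquely_ergodic \<Omega> \<longleftrightarrow> (\<exists>!\<mu>. invariant_prob \<Omega> \<mu>)"

definition strictly_ergodic :: "(int \<Rightarrow> real) set \<Rightarrow> bool" where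
  "strictly_ergodic \<Omega> \<longleftrightarrow> minimal_shift \<Omega> \<and> uniquely_ergodic \<Omega>"

definition transfer :: "real \<Rightarrow> (int \<Rightarrow> real) \<Rightarrow> real^2^2" where
  "transfer E \<omega> = vector [vector [E - \<omega> 1, -1], vector [1, 0]]"

fun cocycle_pos :: "real \<Rightarrow> (int \<Rightarrow> real) \<Rightarrow> nat \<Rightarrow> real^2^2" where
  "cocycle_pos E \<omega> 0 = mat 1"
| "cocycle_pos E \<omega> (Suc n) = transfer E (shiftn (int n) \<omega>) ** cocycle_pos E \<omega> n"

fun cocycle_neg :: "real \<Rightarrow> (int \<Rightarrow> real) \<Rightarrow> nat \<Rightarrow> real^2^2" where
  "cocycle_neg E \<omega> 0 = mat 1"
| "cocycle_neg E \<omega> (Suc m) = matrix_inv (transfer E (shiftn (- int (Suc m)) \<omega>)) ** cocycle_neg E \<omega> m"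

definition cocycle :: "real \<Rightarrow> int \<Rightarrow> (int \<Rightarrow> real) \<Rightarrow> real^2^2" where
  "cocycle E n \<omega> = (if n \<ge> 0 then cocycle_pos E \<omega> (nat n) else cocycle_neg E \<omega> (nat (- n)))"

definition opnorm :: "real^2^2 \<Rightarrow> real" where
  "opnorm M = onorm (\<lambda>x. M *v x)"

definition uniform_cocycle :: "(int \<Rightarrow> real) set \<Rightarrow> real \<Rightarrow> bool" where
  "uniform_cocycle \<Omega> E \<longleftrightarrow>
     (\<exists>L. \<forall>\<epsilon>>0. \<exists>N::nat. \<forall>\<omega>\<in>\<Omega>. \<forall>n::int. \<bar>n\<bar> \<ge> int N \<longrightarrow>
        \<bar>ln (opnorm (cocycle E n \<omega>)) / real_of_int \<bar>n\<bar> - L \<omega>\<bar> < \<epsilon>)"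

definition words :: "(int \<Rightarrow> real) set \<Rightarrow> real list set" where
  "words \<Omega> = {x. \<exists>\<omega>\<in>\<Omega>. \<exists>i::int. x = map (\<lambda>k. \<omega> (i + int k)) [1..<Suc (length x)]}"

definition has_prefix :: "(int \<Rightarrow> real) \<Rightarrow> real list \<Rightarrow> bool" where
  "has_prefix \<omega> x \<longleftrightarrow> (\<forall>k\<in>{1..length x}. \<omega> (int k) = x ! (k - 1))"

definition F :: "(int \<Rightarrow> real) set \<Rightarrow> real \<Rightarrow> real list \<Rightarrow> real" where
  "F \<Omega> E x = ln (opnorm (cocycle E (int (length x)) (SOME \<omega>. \<omega> \<in> \<Omega> \<and> has_prefix \<omega> x)))"

definition word_limit_exists :: "(int \<Rightarrow> real) set \<Rightarrow> real \<Rightarrow> bool" where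
  "word_limit_exists \<Omega> E \<longleftrightarrow>
     (\<exists>c. \<forall>\<epsilon>>0. \<exists>N::nat. \<forall>x\<in>words \<Omega>. length x \<ge> N \<longrightarrow>
        \<bar>F \<Omega> E x / real (length x) - c\<bar> < \<epsilon>)"

end

theory Submission
  imports Defs
begin

text \<open>Write \<open>f\<^sub>n(\<omega>) = log \<parallel>M\<^sup>E(n,\<omega>)\<parallel>\<close>. Since \<open>F\<^sup>E(x) = f\<^sub>|\<^sub>x\<^sub>|(\<omega>)\<close> for any \<open>\<omega> \<in> \<Omega>\<close> starting
  with \<open>x\<close>, and every element of \<open>\<Omega>\<close> starts with a word while every word starts some element,
  the word limit exists iff \<open>f\<^sub>n/n\<close> converges uniformly on \<open>\<Omega>\<close> to a constant. Negative times
  add nothing: \<open>M\<^sup>E(-m,\<omega>)\<close> is the adjugate of \<open>M\<^sup>E(m,T\<^sup>-\<^sup>m\<omega>)\<close>, whose norm differs by at most a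
  factor 4. Conversely, if \<open>f\<^sub>n/n\<close> converges uniformly to some \<open>L\<close>, then \<open>L\<close> is continuous
  (a uniform limit of continuous functions) and \<open>T\<close>-invariant (\<open>f\<^sub>n\<^sub>+\<^sub>1(\<omega>)\<close> and \<open>f\<^sub>n(T\<omega>)\<close> differ
  by a bound independent of \<open>n\<close>), hence constant by minimality.\<close>

section \<open>\<open>2\<times>2\<close> matrices\<close>

definition adj2 :: "real^2^2 \<Rightarrow> real^2^2" where
  "adj2 M = vector [vector [M$2$2, - M$1$2], vector [- M$2$1, M$1$1]]"

lemma matrix_mul_2x2_nth: "((A::real^2^2) ** B)$i$j = A$i$1 * B$1$j + A$i$2 * B$2$j"
  by (simp add: matrix_matrix_mult_def sum_2)

lemma matrix_2x2_eq_iff: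
  "(M::real^2^2) = N \<longleftrightarrow> M$1$1 = N$1$1 \<and> M$1$2 = N$1$2 \<and> M$2$1 = N$2$1 \<and> M$2$2 = N$2$2"
  by (auto simp: vec_eq_iff forall_2)

lemma adj2_adj2 [simp]: "adj2 (adj2 M) = M"
  by (simp add: adj2_def matrix_2x2_eq_iff)

lemma det_adj2 [simp]: "det (adj2 M) = det M"
  by (simp add: adj2_def det_2 mult.commute)

lemma adj2_mult: "adj2 (A ** B) = adj2 B ** adj2 A"
  by (simp add: adj2_def matrix_2x2_eq_iff matrix_mul_2x2_nth algebra_simps)

lemma adj2_mult_self: "det M = 1 \<Longrightarrow> adj2 M ** M = mat 1"
  unfolding matrix_2x2_eq_iff matrix_mul_2x2_nth by (simp add: adj2_def det_2 mat_def algebra_simps)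

lemma mult_adj2_self: "det M = 1 \<Longrightarrow> M ** adj2 M = mat 1"
  unfolding matrix_2x2_eq_iff matrix_mul_2x2_nth by (simp add: adj2_def det_2 mat_def algebra_simps)

lemma matrix_inv_unique:
  fixes M :: "'a::comm_ring_1^'n^'n"
  assumes "M ** B = mat 1" and "B ** M = mat 1"
  shows "matrix_inv M = B"
proof -
  have "M ** matrix_inv M = mat 1 \<and> matrix_inv M ** M = mat 1"
    unfolding matrix_inv_def
    by (rule someI[of "\<lambda>A'. M ** A' = mat 1 \<and> A' ** M = mat 1" B]) (simp add: assms)
  then have "matrix_inv M ** M = mat 1" ..
  have "matrix_inv M = matrix_inv M ** (M ** B)"
    by (simp add: assms(1))
  also have "\<dots> = B"
    by (simp add: matrix_mul_assoc \<open>matrix_inv M ** M = mat 1\<close>)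
  finally show ?thesis .
qed

lemma matrix_inv_eq_adj2: "det M = 1 \<Longrightarrow> matrix_inv M = adj2 M"
  by (rule matrix_inv_unique) (simp_all add: adj2_mult_self mult_adj2_self)

section \<open>The operator norm\<close>

lemma opnorm_nth_le: "\<bar>M$i$j\<bar> \<le> opnorm M"
  unfolding opnorm_def using matrix_component_le_onorm[of M i j] by simp

lemma opnorm_le_sum_nth: "opnorm M \<le> \<bar>M$1$1\<bar> + \<bar>M$1$2\<bar> + \<bar>M$2$1\<bar> + \<bar>M$2$2\<bar>"
  unfolding opnorm_def using onorm_le_matrix_component_sum[of M] by (simp add: sum_2)

lemma opnorm_pos:
  assumes "det M \<noteq> 0"
  shows "0 < opnorm M"
proof (rule ccontr)
  assume "\<not> 0 < opnorm M"
  then have "M$i$j = 0" for i j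
    using opnorm_nth_le[of M i j] by linarith
  with assms show False by (simp add: det_2)
qed

lemma opnorm_mult_le: "opnorm (A ** B) \<le> opnorm A * opnorm B"
proof -
  have "(\<lambda>x. (A ** B) *v x) = (\<lambda>x. A *v x) \<circ> (\<lambda>x. B *v x)"
    by (simp add: o_def matrix_vector_mul_assoc)
  then show ?thesis
    unfolding opnorm_def
    using onorm_compose[OF matrix_vector_mul_bounded_linear matrix_vector_mul_bounded_linear]
    by simp
qed

lemma opnorm_add_le: "opnorm (A + B) \<le> opnorm A + opnorm B"
  unfolding opnorm_def matrix_vector_mult_add_rdistrib
  by (rule onorm_triangle[OF matrix_vector_mul_bounded_linear matrix_vector_mul_bounded_linear])

lemma opnorm_le_4_norm: "opnorm M \<le> 4 * norm M"
proof -
  have entry: "\<bar>M$i$j\<bar> \<le> norm M" for i j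
    using component_le_norm_cart[of "M$i" j] Finite_Cartesian_Product.norm_nth_le[of M i]
    by linarith
  show ?thesis
    using opnorm_le_sum_nth[of M] entry[of 1 1] entry[of 1 2] entry[of 2 1] entry[of 2 2]
    by linarith
qed

lemma continuous_on_opnorm: "continuous_on UNIV opnorm"
proof (rule lipschitz_on_continuous_on[of 4], rule lipschitz_onI)
  fix A B :: "real^2^2"
  have "opnorm A \<le> opnorm (A - B) + opnorm B" "opnorm B \<le> opnorm (B - A) + opnorm A"
    using opnorm_add_le[of "A - B" B] opnorm_add_le[of "B - A" A] by simp_all
  then show "dist (opnorm A) (opnorm B) \<le> 4 * dist A B"
    using opnorm_le_4_norm[of "A - B"] opnorm_le_4_norm[of "B - A"]
    by (simp add: dist_real_def dist_norm norm_minus_commute)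
qed simp

lemma ln_opnorm_mult_le:
  assumes "det A \<noteq> 0" and "det B \<noteq> 0"
  shows "ln (opnorm (A ** B)) \<le> ln (opnorm A) + ln (opnorm B)"
proof -
  have "0 < opnorm (A ** B)" "0 < opnorm A" "0 < opnorm B"
    using assms by (simp_all add: opnorm_pos det_mul)
  then have "ln (opnorm (A ** B)) \<le> ln (opnorm A * opnorm B)"
    using opnorm_mult_le[of A B] by simp
  with \<open>0 < opnorm A\<close> \<open>0 < opnorm B\<close> show ?thesis
    by (simp add: ln_mult)
qed

lemma opnorm_adj2_le: "opnorm (adj2 M) \<le> 4 * opnorm M"
  using opnorm_le_sum_nth[of "adj2 M"] opnorm_nth_le[of M 1 1] opnorm_nth_le[of M 1 2]
    opnorm_nth_le[of M 2 1] opnorm_nth_le[of M 2 2]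
  by (simp add: adj2_def)

lemma ln_opnorm_adj2_bound:
  assumes "det M = 1"
  shows "\<bar>ln (opnorm (adj2 M)) - ln (opnorm M)\<bar> \<le> ln 4"
proof -
  have "ln (opnorm (adj2 N)) \<le> ln 4 + ln (opnorm N)" if "det N = 1" for N
  proof -
    have "0 < opnorm N" "0 < opnorm (adj2 N)"
      using that by (simp_all add: opnorm_pos)
    then have "ln (opnorm (adj2 N)) \<le> ln (4 * opnorm N)"
      using opnorm_adj2_le[of N] by simp
    with \<open>0 < opnorm N\<close> show ?thesis by (simp add: ln_mult)
  qed
  from this[of M] this[of "adj2 M"] assms show ?thesis by simp
qed

lemma ln_opnorm_mult_bound:
  assumes "det Q \<noteq> 0" and "det T = 1"
  shows "\<bar>ln (opnorm (Q ** T)) - ln (opnorm Q)\<bar> \<le> \<bar>ln (opnorm T)\<bar> + \<bar>ln (opnorm (adj2 T))\<bar>"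
proof -
  have "Q = (Q ** T) ** adj2 T"
    by (simp add: assms(2) mult_adj2_self flip: matrix_mul_assoc)
  then have "ln (opnorm Q) \<le> ln (opnorm (Q ** T)) + ln (opnorm (adj2 T))"
    using ln_opnorm_mult_le[of "Q ** T" "adj2 T"] assms by (simp add: det_mul)
  then show ?thesis
    using ln_opnorm_mult_le[of Q T] assms by simp
qed

section \<open>The transfer matrix cocycle\<close>

lemma transfer_nth:
  "transfer E \<omega> $1$1 = E - \<omega> 1" "transfer E \<omega> $1$2 = -1"
  "transfer E \<omega> $2$1 = 1" "transfer E \<omega> $2$2 = 0"
  by (simp_all add: transfer_def)

lemma det_transfer [simp]: "det (transfer E \<omega>) = 1"
  by (simp add: transfer_nth det_2)

lemma det_cocycle_pos [simp]: "det (cocycle_pos E \<omega> n) = 1"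
  by (induction n) (simp_all add: det_mul)

lemma shiftn_shiftn: "shiftn k (shiftn l \<omega>) = shiftn (k + l) \<omega>"
  by (simp add: shiftn_def ac_simps)

lemma shift_eq_shiftn: "shift \<omega> = shiftn 1 \<omega>"
  by (simp add: shift_def shiftn_def)

lemma cocycle_pos_Suc_shift:
  "cocycle_pos E \<omega> (Suc n) = cocycle_pos E (shift \<omega>) n ** transfer E \<omega>"
proof (induction n)
  case 0
  show ?case by (simp add: shiftn_def)
next
  case (Suc n)
  have "cocycle_pos E \<omega> (Suc (Suc n))
      = transfer E (shiftn (int (Suc n)) \<omega>) ** (cocycle_pos E (shift \<omega>) n ** transfer E \<omega>)"
    using Suc by simp
  also have "\<dots> = cocycle_pos E (shift \<omega>) (Suc n) ** transfer E \<omega>"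
    by (simp add: matrix_mul_assoc shift_eq_shiftn shiftn_shiftn add.commute)
  finally show ?case .
qed

lemma cocycle_pos_cong:
  "(\<And>k. 1 \<le> k \<Longrightarrow> k \<le> int n \<Longrightarrow> \<omega> k = \<omega>' k) \<Longrightarrow> cocycle_pos E \<omega> n = cocycle_pos E \<omega>' n"
proof (induction n)
  case (Suc n)
  have "transfer E (shiftn (int n) \<omega>) = transfer E (shiftn (int n) \<omega>')"
    using Suc.prems[of "1 + int n"] by (simp add: transfer_def shiftn_def add.commute)
  with Suc show ?case by simp
qed simp

lemma cocycle_neg_eq_adj2: "cocycle_neg E \<omega> m = adj2 (cocycle_pos E (shiftn (- int m) \<omega>) m)"
proof (induction m)
  case 0
  show ?case by (simp add: adj2_def mat_def matrix_2x2_eq_iff)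
next
  case (Suc m)
  let ?v = "shiftn (- int (Suc m)) \<omega>"
  have "shift ?v = shiftn (- int m) \<omega>"
    by (simp add: shift_eq_shiftn shiftn_shiftn)
  with Suc have "cocycle_neg E \<omega> (Suc m) = adj2 (transfer E ?v) ** adj2 (cocycle_pos E (shift ?v) m)"
    by (simp add: matrix_inv_eq_adj2)
  also have "\<dots> = adj2 (cocycle_pos E ?v (Suc m))"
    by (simp only: cocycle_pos_Suc_shift adj2_mult)
  finally show ?case .
qed

lemma continuous_on_cocycle_pos: "continuous_on UNIV (\<lambda>\<omega>. cocycle_pos E \<omega> n)"
proof (induction n)
  case (Suc n)
  have "continuous_on UNIV (\<lambda>\<omega>::int \<Rightarrow> real. E - \<omega> (1 + int n))"
    by (intro continuous_intros continuous_on_product_coordinates)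
  then have transfer: "continuous_on UNIV (\<lambda>\<omega>. transfer E (shiftn (int n) \<omega>) $ i $ j)" for i j
    using exhaust_2[of i] exhaust_2[of j]
    by (auto simp: transfer_nth shiftn_def add.commute)
  have cocycle: "continuous_on UNIV (\<lambda>\<omega>. cocycle_pos E \<omega> n $ i $ j)" for i j
    using Suc by (intro continuous_intros)
  have "(\<lambda>\<omega>. cocycle_pos E \<omega> (Suc n)) = (\<lambda>\<omega>. \<chi> i j.
      transfer E (shiftn (int n) \<omega>) $ i $ 1 * cocycle_pos E \<omega> n $ 1 $ j
      + transfer E (shiftn (int n) \<omega>) $ i $ 2 * cocycle_pos E \<omega> n $ 2 $ j)"
    by (simp add: fun_eq_iff vec_eq_iff matrix_mul_2x2_nth)
  then show ?case
    using transfer cocycle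
    by (simp only:) (intro continuous_on_vec_lambda continuous_on_add continuous_on_mult)
qed simp

definition log_norm :: "real \<Rightarrow> nat \<Rightarrow> (int \<Rightarrow> real) \<Rightarrow> real" where
  "log_norm E n \<omega> = ln (opnorm (cocycle_pos E \<omega> n))"

lemma continuous_on_log_norm: "continuous_on UNIV (log_norm E n)"
  unfolding log_norm_def
  by (intro continuous_on_ln continuous_on_compose2[OF continuous_on_opnorm]
      continuous_on_cocycle_pos) (simp_all add: opnorm_pos less_imp_neq[symmetric])

lemma log_norm_Suc_shift_bound:
  "\<bar>log_norm E (Suc n) \<omega> - log_norm E n (shift \<omega>)\<bar>
     \<le> \<bar>ln (opnorm (transfer E \<omega>))\<bar> + \<bar>ln (opnorm (adj2 (transfer E \<omega>)))\<bar>"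
  unfolding log_norm_def cocycle_pos_Suc_shift by (rule ln_opnorm_mult_bound) simp_all

lemma ln_opnorm_cocycle_neg_bound:
  "\<bar>ln (opnorm (cocycle E (- int m) \<omega>)) - log_norm E m (shiftn (- int m) \<omega>)\<bar> \<le> ln 4"
proof (cases "m = 0")
  case False
  then show ?thesis
    unfolding log_norm_def cocycle_def cocycle_neg_eq_adj2
    by (simp add: ln_opnorm_adj2_bound)
qed (simp add: cocycle_def log_norm_def)

section \<open>Subshifts\<close>

lemma shiftn_induct:
  assumes "P \<omega>"
    and forward: "\<And>\<omega>. P \<omega> \<Longrightarrow> P (shift \<omega>)"
    and backward: "\<And>\<omega>. P \<omega> \<Longrightarrow> P (shiftn (- 1) \<omega>)"
  shows "P (shiftn k \<omega>)"
proof (induction k rule: int_induct[where k = 0])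
  case base
  show ?case using \<open>P \<omega>\<close> by (simp add: shiftn_def)
next
  case (step1 i)
  then show ?case
    using forward[of "shiftn i \<omega>"] by (simp add: shift_eq_shiftn shiftn_shiftn add.commute)
next
  case (step2 i)
  then show ?case
    using backward[of "shiftn i \<omega>"] by (simp add: shiftn_shiftn)
qed

lemma subshift_shiftn_mem:
  assumes "subshift A \<Omega>" and "\<omega> \<in> \<Omega>"
  shows "shiftn k \<omega> \<in> \<Omega>"
proof (rule shiftn_induct[of "\<lambda>\<omega>. \<omega> \<in> \<Omega>"])
  show "\<omega>' \<in> \<Omega> \<Longrightarrow> shiftn (- 1) \<omega>' \<in> \<Omega>" for \<omega>'
  proof -
    assume "\<omega>' \<in> \<Omega>"
    then obtain \<nu> where "\<nu> \<in> \<Omega>" "\<omega>' = shift \<nu>"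
      using assms(1) unfolding subshift_def by blast
    then show ?thesis by (simp add: shift_def shiftn_def)
  qed
qed (use assms in \<open>auto simp: subshift_def\<close>)

lemma subshift_shift_mem: "subshift A \<Omega> \<Longrightarrow> \<omega> \<in> \<Omega> \<Longrightarrow> shift \<omega> \<in> \<Omega>"
  by (simp add: shift_eq_shiftn subshift_shiftn_mem)

lemma shift_invariant_imp_shiftn_invariant:
  assumes "subshift A \<Omega>" and invariant: "\<And>\<omega>. \<omega> \<in> \<Omega> \<Longrightarrow> f (shift \<omega>) = f \<omega>"
    and "\<omega> \<in> \<Omega>"
  shows "f (shiftn k \<omega>) = f \<omega>"
proof -
  have "shiftn k \<omega> \<in> \<Omega> \<and> f (shiftn k \<omega>) = f \<omega>"
  proof (rule shiftn_induct[of "\<lambda>\<omega>'. \<omega>' \<in> \<Omega> \<and> f \<omega>' = f \<omega>"])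
    fix \<omega>' assume \<omega>': "\<omega>' \<in> \<Omega> \<and> f \<omega>' = f \<omega>"
    then have "shiftn (- 1) \<omega>' \<in> \<Omega>"
      using subshift_shiftn_mem[OF assms(1)] by blast
    moreover have "shift (shiftn (- 1) \<omega>') = \<omega>'"
      by (simp add: shift_def shiftn_def)
    ultimately show "shiftn (- 1) \<omega>' \<in> \<Omega> \<and> f (shiftn (- 1) \<omega>') = f \<omega>"
      using invariant[of "shiftn (- 1) \<omega>'"] \<omega>' by simp
  qed (use assms subshift_shift_mem in auto)
  then show ?thesis ..
qed

lemma minimal_shift_invariant_imp_constant:
  fixes f :: "(int \<Rightarrow> real) \<Rightarrow> 'a::t1_space"
  assumes "subshift A \<Omega>" and "minimal_shift \<Omega>" and "continuous_on \<Omega> f"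
    and "\<And>\<omega>. \<omega> \<in> \<Omega> \<Longrightarrow> f (shift \<omega>) = f \<omega>"
  shows "\<exists>c. \<forall>\<omega>\<in>\<Omega>. f \<omega> = c"
proof (cases "\<Omega> = {}")
  case False
  then obtain \<omega>\<^sub>0 where "\<omega>\<^sub>0 \<in> \<Omega>" by blast
  define orbit where "orbit = {shiftn k \<omega>\<^sub>0 | k. True}"
  have "closure orbit \<subseteq> \<Omega>"
    using assms(1) \<open>\<omega>\<^sub>0 \<in> \<Omega>\<close>
    by (intro closure_minimal) (auto simp: orbit_def subshift_def subshift_shiftn_mem)
  have "f \<omega> = f \<omega>\<^sub>0" if "\<omega> \<in> \<Omega>" for \<omega>
  proof (rule continuous_constant_on_closure[of orbit])
    show "continuous_on (closure orbit) f"
      using assms(3) \<open>closure orbit \<subseteq> \<Omega>\<close> by (rule continuous_on_subset)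
    show "\<nu> \<in> orbit \<Longrightarrow> f \<nu> = f \<omega>\<^sub>0" for \<nu>
      using shift_invariant_imp_shiftn_invariant[of A \<Omega> f, OF assms(1,4) \<open>\<omega>\<^sub>0 \<in> \<Omega>\<close>]
      by (auto simp: orbit_def)
    show "\<omega> \<in> closure orbit"
      using assms(2) \<open>\<omega>\<^sub>0 \<in> \<Omega>\<close> that unfolding minimal_shift_def orbit_def by auto
  qed
  then show ?thesis by blast
qed simp

section \<open>Words\<close>

definition initial_word :: "(int \<Rightarrow> real) \<Rightarrow> nat \<Rightarrow> real list" where
  "initial_word \<omega> n = map (\<lambda>k. \<omega> (int k)) [1..<Suc n]"

lemma length_initial_word [simp]: "length (initial_word \<omega> n) = n"
  by (simp add: initial_word_def)

lemma initial_word_mem_words: "\<omega> \<in> \<Omega> \<Longrightarrow> initial_word \<omega> n \<in> words \<Omega>"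
  unfolding words_def initial_word_def by (rule CollectI, rule bexI[of _ \<omega>], rule exI[of _ 0]) simp_all

lemma has_prefix_initial_word: "has_prefix \<omega> (initial_word \<omega> n)"
  by (auto simp: has_prefix_def initial_word_def nth_map_upt simp del: upt_Suc)

lemma words_has_prefix_shiftn:
  assumes "x \<in> words \<Omega>"
  obtains \<omega> i where "\<omega> \<in> \<Omega>" and "has_prefix (shiftn i \<omega>) x"
proof -
  from assms obtain \<omega> i where "\<omega> \<in> \<Omega>"
    and x_eq: "x = map (\<lambda>k. \<omega> (i + int k)) [1..<Suc (length x)]"
    unfolding words_def by blast
  have "initial_word (shiftn i \<omega>) (length x) = x"
    by (subst (2) x_eq) (simp add: initial_word_def shiftn_def add.commute)
  then have "has_prefix (shiftn i \<omega>) x"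
    using has_prefix_initial_word by metis
  with \<open>\<omega> \<in> \<Omega>\<close> show thesis by (rule that)
qed

lemma has_prefix_cocycle_pos_eq:
  assumes "has_prefix \<omega> x" and "has_prefix \<omega>' x"
  shows "cocycle_pos E \<omega> (length x) = cocycle_pos E \<omega>' (length x)"
proof (rule cocycle_pos_cong)
  fix k :: int assume "1 \<le> k" "k \<le> int (length x)"
  then have "nat k \<in> {1..length x}" and k: "int (nat k) = k"
    by auto
  then have "\<omega> (int (nat k)) = x ! (nat k - 1)" "\<omega>' (int (nat k)) = x ! (nat k - 1)"
    using assms unfolding has_prefix_def by blast+
  then show "\<omega> k = \<omega>' k"
    unfolding k by simp
qed

lemma F_eq_log_norm:
  assumes "\<omega> \<in> \<Omega>" and "has_prefix \<omega> x"
  shows "F \<Omega> E x = log_norm E (length x) \<omega>"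
proof -
  let ?\<nu> = "SOME \<nu>. \<nu> \<in> \<Omega> \<and> has_prefix \<nu> x"
  have "?\<nu> \<in> \<Omega> \<and> has_prefix ?\<nu> x"
    by (rule someI[of _ \<omega>]) (use assms in simp)
  then show ?thesis
    using has_prefix_cocycle_pos_eq[of ?\<nu> x \<omega>] assms(2)
    by (simp add: F_def log_norm_def cocycle_def)
qed

lemma ball_words_iff:
  assumes "subshift A \<Omega>"
  shows "(\<forall>x\<in>words \<Omega>. P (length x) (F \<Omega> E x)) \<longleftrightarrow> (\<forall>n. \<forall>\<omega>\<in>\<Omega>. P n (log_norm E n \<omega>))"
proof
  assume "\<forall>x\<in>words \<Omega>. P (length x) (F \<Omega> E x)"
  then show "\<forall>n. \<forall>\<omega>\<in>\<Omega>. P n (log_norm E n \<omega>)"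
    using initial_word_mem_words F_eq_log_norm has_prefix_initial_word
    by (metis length_initial_word)
next
  assume P: "\<forall>n. \<forall>\<omega>\<in>\<Omega>. P n (log_norm E n \<omega>)"
  show "\<forall>x\<in>words \<Omega>. P (length x) (F \<Omega> E x)"
  proof
    fix x assume "x \<in> words \<Omega>"
    then obtain \<omega> i where "\<omega> \<in> \<Omega>" "has_prefix (shiftn i \<omega>) x"
      by (rule words_has_prefix_shiftn)
    moreover have "shiftn i \<omega> \<in> \<Omega>"
      using assms \<open>\<omega> \<in> \<Omega>\<close> by (rule subshift_shiftn_mem)
    ultimately show "P (length x) (F \<Omega> E x)"
      using P by (simp add: F_eq_log_norm)
  qed
qed

section \<open>Growth rates\<close>

lemma growth_rate_eq_if_bounded_shift:
  fixes u v :: "nat \<Rightarrow> real"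
  assumes u: "(\<lambda>n. u n / n) \<longlonglongrightarrow> a" and v: "(\<lambda>n. v n / n) \<longlonglongrightarrow> b"
    and bounded: "\<And>n. \<bar>u (Suc n) - v n\<bar> \<le> C"
  shows "a = b"
proof -
  have "(\<lambda>n. (u (Suc n) - v n) / Suc n) \<longlonglongrightarrow> 0"
  proof (rule Lim_null_comparison)
    show "\<forall>\<^sub>F n in sequentially. norm ((u (Suc n) - v n) / Suc n) \<le> C / Suc n"
      using bounded by (auto simp: divide_right_mono abs_divide)
    show "(\<lambda>n. C / Suc n) \<longlonglongrightarrow> 0"
      using LIMSEQ_Suc[OF lim_const_over_n[of C]] by simp
  qed
  moreover have "(\<lambda>n. v n / n * (n / Suc n)) \<longlonglongrightarrow> b * 1"
    by (intro tendsto_mult v LIMSEQ_n_over_Suc_n)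
  ultimately have "(\<lambda>n. (u (Suc n) - v n) / Suc n + v n / n * (n / Suc n)) \<longlonglongrightarrow> 0 + b * 1"
    by (rule tendsto_add)
  moreover have "\<forall>\<^sub>F n in sequentially.
      (u (Suc n) - v n) / Suc n + v n / n * (n / Suc n) = u (Suc n) / Suc n"
    using eventually_gt_at_top[of 0] by eventually_elim (simp add: diff_divide_distrib)
  ultimately have "(\<lambda>n. u (Suc n) / Suc n) \<longlonglongrightarrow> b"
    using Lim_transform_eventually by fastforce
  moreover have "(\<lambda>n. u (Suc n) / Suc n) \<longlonglongrightarrow> a"
    using LIMSEQ_Suc[OF u] by simp
  ultimately show ?thesis
    using LIMSEQ_unique by blast
qed

lemma ln_opnorm_cocycle_near_log_norm:
  assumes "subshift A \<Omega>" and "\<omega> \<in> \<Omega>"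
  shows "\<exists>\<nu>\<in>\<Omega>. \<bar>ln (opnorm (cocycle E n \<omega>)) - log_norm E (nat \<bar>n\<bar>) \<nu>\<bar> \<le> ln 4"
proof (cases "n \<ge> 0")
  case True
  then have "ln (opnorm (cocycle E n \<omega>)) = log_norm E (nat \<bar>n\<bar>) \<omega>"
    by (simp add: cocycle_def log_norm_def)
  with assms(2) show ?thesis by force
next
  case False
  define m where "m = nat (- n)"
  have "n = - int m" and "nat \<bar>n\<bar> = m"
    using False by (simp_all add: m_def)
  then show ?thesis
    using ln_opnorm_cocycle_neg_bound[of E m \<omega>] subshift_shiftn_mem[OF assms, of "- int m"] by auto
qed

lemma word_limit_exists_iff_uniform_limit:
  assumes "subshift A \<Omega>"
  shows "word_limit_exists \<Omega> E \<longleftrightarrow>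
    (\<exists>c. uniform_limit \<Omega> (\<lambda>n \<omega>. log_norm E n \<omega> / n) (\<lambda>_. c) sequentially)"
proof -
  have "(\<forall>x\<in>words \<Omega>. N \<le> length x \<longrightarrow> \<bar>F \<Omega> E x / length x - c\<bar> < \<epsilon>)
      \<longleftrightarrow> (\<forall>n\<ge>N. \<forall>\<omega>\<in>\<Omega>. \<bar>log_norm E n \<omega> / n - c\<bar> < \<epsilon>)" for N c \<epsilon>
    using ball_words_iff[OF assms, of "\<lambda>n y. N \<le> n \<longrightarrow> \<bar>y / n - c\<bar> < \<epsilon>"] by auto
  then show ?thesis
    unfolding word_limit_exists_def uniform_limit_sequentially_iff dist_real_def by simp
qed

lemma uniform_limit_of_uniform_cocycle:
  assumes "uniform_cocycle \<Omega> E"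
  obtains L where "uniform_limit \<Omega> (\<lambda>n \<omega>. log_norm E n \<omega> / n) L sequentially"
proof -
  from assms obtain L where L: "\<forall>\<epsilon>>0. \<exists>N::nat. \<forall>\<omega>\<in>\<Omega>. \<forall>n::int. \<bar>n\<bar> \<ge> int N \<longrightarrow>
      \<bar>ln (opnorm (cocycle E n \<omega>)) / real_of_int \<bar>n\<bar> - L \<omega>\<bar> < \<epsilon>"
    unfolding uniform_cocycle_def by blast
  have "uniform_limit \<Omega> (\<lambda>n \<omega>. log_norm E n \<omega> / n) L sequentially"
    unfolding uniform_limit_sequentially_iff dist_real_def
  proof (intro allI impI)
    fix \<epsilon> :: real assume "\<epsilon> > 0"
    with L obtain N :: nat where N: "\<forall>\<omega>\<in>\<Omega>. \<forall>n::int. \<bar>n\<bar> \<ge> int N \<longrightarrow>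
        \<bar>ln (opnorm (cocycle E n \<omega>)) / real_of_int \<bar>n\<bar> - L \<omega>\<bar> < \<epsilon>"
      by blast
    have "\<bar>log_norm E n \<omega> / n - L \<omega>\<bar> < \<epsilon>" if "N \<le> n" "\<omega> \<in> \<Omega>" for n \<omega>
      using N[rule_format, OF that(2), of "int n"] that(1) by (simp add: cocycle_def log_norm_def)
    then show "\<exists>N. \<forall>n\<ge>N. \<forall>\<omega>\<in>\<Omega>. \<bar>log_norm E n \<omega> / n - L \<omega>\<bar> < \<epsilon>"
      by blast
  qed
  then show thesis by (rule that)
qed

lemma uniform_cocycle_if_uniform_limit_constant:
  assumes "subshift A \<Omega>"
    and lim: "uniform_limit \<Omega> (\<lambda>n \<omega>. log_norm E n \<omega> / n) (\<lambda>_. c) sequentially"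
  shows "uniform_cocycle \<Omega> E"
  unfolding uniform_cocycle_def
proof (intro exI[of _ "\<lambda>_. c"] allI impI)
  fix \<epsilon> :: real assume "\<epsilon> > 0"
  then obtain N\<^sub>1 where N\<^sub>1: "\<forall>n\<ge>N\<^sub>1. \<forall>\<omega>\<in>\<Omega>. \<bar>log_norm E n \<omega> / n - c\<bar> < \<epsilon> / 2"
    using lim unfolding uniform_limit_sequentially_iff dist_real_def by (meson half_gt_zero)
  \<comment> \<open>\<open>N\<^sub>2\<close> makes the error \<open>ln 4 / |n|\<close> of negative times smaller than \<open>\<epsilon> / 2\<close>.\<close>
  obtain N\<^sub>2 :: nat where N\<^sub>2: "2 * ln 4 / \<epsilon> < N\<^sub>2"
    using reals_Archimedean2 by blast
  have "\<bar>ln (opnorm (cocycle E n \<omega>)) / \<bar>n\<bar> - c\<bar> < \<epsilon>"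
    if "\<omega> \<in> \<Omega>" and n: "int (max N\<^sub>1 N\<^sub>2) \<le> \<bar>n\<bar>" for \<omega> n
  proof -
    define m where "m = nat \<bar>n\<bar>"
    obtain \<nu> where "\<nu> \<in> \<Omega>" and near: "\<bar>ln (opnorm (cocycle E n \<omega>)) - log_norm E m \<nu>\<bar> \<le> ln 4"
      using ln_opnorm_cocycle_near_log_norm[OF assms(1) \<open>\<omega> \<in> \<Omega>\<close>] unfolding m_def by blast
    have "N\<^sub>2 \<le> m" "N\<^sub>1 \<le> m" "real_of_int \<bar>n\<bar> = m"
      using n by (auto simp: m_def)
    moreover have "2 * ln 4 < \<epsilon> * N\<^sub>2"
      using N\<^sub>2 \<open>\<epsilon> > 0\<close> by (simp add: field_simps)
    ultimately have "2 * ln 4 < \<epsilon> * m"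
      using \<open>\<epsilon> > 0\<close> by (simp add: order_less_le_trans)
    then have "0 < m"
      using ln_gt_zero[of 4] by (cases "m = 0") auto
    then have "\<bar>ln (opnorm (cocycle E n \<omega>)) / m - log_norm E m \<nu> / m\<bar> < \<epsilon> / 2"
      using near \<open>2 * ln 4 < \<epsilon> * m\<close> by (simp add: field_simps abs_divide flip: diff_divide_distrib)
    moreover have "\<bar>log_norm E m \<nu> / m - c\<bar> < \<epsilon> / 2"
      using N\<^sub>1 \<open>N\<^sub>1 \<le> m\<close> \<open>\<nu> \<in> \<Omega>\<close> by blast
    ultimately show ?thesis
      unfolding \<open>real_of_int \<bar>n\<bar> = m\<close> by linarith
  qed
  then show "\<exists>N::nat. \<forall>\<omega>\<in>\<Omega>. \<forall>n::int. \<bar>n\<bar> \<ge> int N \<longrightarrow>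
      \<bar>ln (opnorm (cocycle E n \<omega>)) / real_of_int \<bar>n\<bar> - c\<bar> < \<epsilon>"
    by blast
qed

lemma uniform_limit_log_norm_shift_invariant:
  assumes "subshift A \<Omega>" and lim: "uniform_limit \<Omega> (\<lambda>n \<omega>. log_norm E n \<omega> / n) L sequentially"
    and "\<omega> \<in> \<Omega>"
  shows "L (shift \<omega>) = L \<omega>"
proof -
  have "shift \<omega> \<in> \<Omega>"
    using assms(1,3) by (rule subshift_shift_mem)
  then show ?thesis
    using growth_rate_eq_if_bounded_shift[OF tendsto_uniform_limitI[OF lim \<open>\<omega> \<in> \<Omega>\<close>]
        tendsto_uniform_limitI[OF lim \<open>shift \<omega> \<in> \<Omega>\<close>] log_norm_Suc_shift_bound]
    by simp
qed

lemma uniform_limit_log_norm_constant: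
  assumes "subshift A \<Omega>" and "minimal_shift \<Omega>"
    and lim: "uniform_limit \<Omega> (\<lambda>n \<omega>. log_norm E n \<omega> / n) L sequentially"
  obtains c where "\<forall>\<omega>\<in>\<Omega>. L \<omega> = c"
proof -
  have "continuous_on \<Omega> (\<lambda>\<omega>. log_norm E n \<omega> * inverse n)" for n
    by (intro continuous_on_mult_right continuous_on_subset[OF continuous_on_log_norm]) simp
  then have "continuous_on \<Omega> L"
    by (intro uniform_limit_theorem[OF _ lim]) (simp_all add: divide_inverse)
  moreover have "\<And>\<omega>. \<omega> \<in> \<Omega> \<Longrightarrow> L (shift \<omega>) = L \<omega>"
    using assms(1) lim by (rule uniform_limit_log_norm_shift_invariant)
  ultimately show thesis
    using minimal_shift_invariant_imp_constant[OF assms(1,2)] that by blast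
qed

theorem proposition4p4:
  fixes A :: "real set" and \<Omega> :: "(int \<Rightarrow> real) set" and E :: real
  assumes "subshift A \<Omega>" and "strictly_ergodic \<Omega>"
  shows "uniform_cocycle \<Omega> E \<longleftrightarrow> word_limit_exists \<Omega> E"
proof
  assume "uniform_cocycle \<Omega> E"
  then obtain L where L: "uniform_limit \<Omega> (\<lambda>n \<omega>. log_norm E n \<omega> / n) L sequentially"
      (is "uniform_limit \<Omega> ?rate L sequentially")
    by (rule uniform_limit_of_uniform_cocycle)
  moreover have "minimal_shift \<Omega>"
    using assms(2) by (simp add: strictly_ergodic_def)
  ultimately obtain c where "\<forall>\<omega>\<in>\<Omega>. L \<omega> = c"
    using assms(1) uniform_limit_log_norm_constant by blast
  then have "uniform_limit \<Omega> ?rate L sequentially \<longleftrightarrow> uniform_limit \<Omega> ?rate (\<lambda>_. c) sequentially"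
    by (intro uniform_limit_cong') simp_all
  with L have "uniform_limit \<Omega> ?rate (\<lambda>_. c) sequentially" by simp
  then show "word_limit_exists \<Omega> E"
    unfolding word_limit_exists_iff_uniform_limit[OF assms(1)] ..
next
  assume "word_limit_exists \<Omega> E"
  then obtain c where "uniform_limit \<Omega> (\<lambda>n \<omega>. log_norm E n \<omega> / n) (\<lambda>_. c) sequentially"
    unfolding word_limit_exists_iff_uniform_limit[OF assms(1)] ..
  with assms(1) show "uniform_cocycle \<Omega> E"
    by (rule uniform_cocycle_if_uniform_limit_constant)
qed

end
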